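(* Let $K\in BC^1(\mathbf{R}^2)$ be real-valued and satisfy: there is $k_m>0$ with $K(x)\ge k_m$ for all $x$; $x\cdot\nabla K(x)\le0$ for all $x$; and there are $r_0>0$, $k_0\ge k_m$ with $K(x)=k_0$ for $|x|>r_0$. There is a constant $C_{r_0}>0$ (independent of $t$ and of the data) such that the following holds. Let $u_0,u_1\in C_0^\infty(\mathbf{R}^2)$ be real-valued (with supports in some ball $\{|x|\le L\}$) and $u$ the smooth solution of $$u_{tt}-\nabla\cdot(K(x)\nabla u)=0\ \text{in }(0,\infty)\times\mathbf{R}^2,\quad u(0,\cdot)=u_0,\ u_t(0,\cdot)=u_1.$$ Let $R>r_0$ and $t>R/\sqrt{k_0}$. Then $$\int_{\mathbf{R}^2}|u_t(t,x)\,(x\cdot\nabla u(t,x))|\,dx\le\frac{R}{\sqrt{k_m}}E_{u,R}(t)+\frac{C_{r_0}}{\sqrt{k_m}}\int_{\mathbf{R}^2}(1+|x|)e(0,x)\,dx+t\int_{|x|\ge R}e(t,x)\,dx,$$ where $e(t,x):=\frac12\big(|u_t(t,x)|^2+K(x)|\nabla u(t,x)|^2\big)$ and $E_{u,R}(t):=\int_{|x|\le R}e(t,x)\,dx$.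
   Context: $BC^1(\mathbf{R}^2)$ denotes the bounded continuous functions on $\mathbf{R}^2$ with bounded continuous first partial derivatives. All functions are real-valued. *)

theory Defs
  imports "HOL-Analysis.Analysis"
begin

fun iter_pderiv :: "('a::real_normed_vector \<Rightarrow> real) \<Rightarrow> 'a list \<Rightarrow> 'a \<Rightarrow> real" where
  "iter_pderiv f [] = f"
| "iter_pderiv f (v # vs) = (\<lambda>x. frechet_derivative (iter_pderiv f vs) (at x) v)"

text \<open>C-infinity on the whole space: every iterated partial derivative (along basis
  vectors) exists and is differentiable everywhere (hence all partials are continuous).\<close>
definition smooth :: "('a::euclidean_space \<Rightarrow> real) \<Rightarrow> bool" where
  "smooth f \<longleftrightarrow> (\<forall>vs. set vs \<subseteq> Basis \<longrightarrow> (\<forall>x. iter_pderiv f vs differentiable at x))"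

definition grad :: "(real^2 \<Rightarrow> real) \<Rightarrow> real^2 \<Rightarrow> real^2" where
  "grad f x = (\<chi> i. frechet_derivative f (at x) (axis i 1))"

definition divergence :: "(real^2 \<Rightarrow> real^2) \<Rightarrow> real^2 \<Rightarrow> real" where
  "divergence F x = (\<Sum>i\<in>UNIV. frechet_derivative (\<lambda>y. F y $ i) (at x) (axis i 1))"

definition BC1 :: "(real^2 \<Rightarrow> real) \<Rightarrow> bool" where
  "BC1 K \<longleftrightarrow> bounded (range K) \<and> continuous_on UNIV K \<and> (\<forall>x. K differentiable at x) \<and>
     (\<forall>i. continuous_on UNIV (\<lambda>x. frechet_derivative K (at x) (axis i 1)) \<and>
          bounded (range (\<lambda>x. frechet_derivative K (at x) (axis i 1))))"

definition C0_inf :: "(real^2 \<Rightarrow> real) \<Rightarrow> bool" where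
  "C0_inf f \<longleftrightarrow> smooth f \<and> (\<exists>L. \<forall>x. norm x > L \<longrightarrow> f x = 0)"

definition dt :: "(real \<Rightarrow> real^2 \<Rightarrow> real) \<Rightarrow> real \<Rightarrow> real^2 \<Rightarrow> real" where
  "dt u t x = deriv (\<lambda>s. u s x) t"

definition edens :: "(real^2 \<Rightarrow> real) \<Rightarrow> (real \<Rightarrow> real^2 \<Rightarrow> real) \<Rightarrow> real \<Rightarrow> real^2 \<Rightarrow> real" where
  "edens K u t x = (1/2) * ((dt u t x)\<^sup>2 + K x * (norm (grad (u t) x))\<^sup>2)"

end

theory Submission
  imports Defs
begin

text \<open>Split the integrand at \<open>|x| = R\<close>. Inside the ball, AM-GM gives
  \<open>|u\<^sub>t| |x| |\<nabla>u| \<le> R e / \<surd>K \<le> R e / \<surd>k\<^sub>m\<close>. Outside, \<open>K = k\<^sub>0\<close>, and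
  \<open>|x| \<le> \<surd>k\<^sub>0 t + (|x| - \<surd>k\<^sub>0 t)\<^sub>+\<close> bounds the integrand by \<open>t e + (|x| - \<surd>k\<^sub>0 t)\<^sub>+ e / \<surd>k\<^sub>0\<close>.

  The last term is controlled by a weighted energy inequality: if \<open>\<psi>\<close> is nondecreasing and
  \<open>c\<^sup>2 \<ge> K\<close> wherever \<open>\<psi>'(\<langle>x\<rangle> - c\<tau>) \<noteq> 0\<close>, then \<open>\<integral> \<psi>(\<langle>x\<rangle> - c\<tau>) e(\<tau>, x) dx\<close> is nonincreasing
  in \<open>\<tau>\<close>, since its time derivative is the integral of a divergence plus a nonpositive term.
  Here \<open>\<langle>x\<rangle> = \<surd>(1 + |x|\<^sup>2)\<close> replaces \<open>|x|\<close> to keep the weight differentiable. Taking for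
  \<open>\<psi>\<close> a smoothed \<open>(\<cdot>)\<^sub>+\<close>, first with speed \<open>\<surd>(sup K)\<close> up to the time \<open>(r\<^sub>0 + 2)/\<surd>k\<^sub>0\<close> and then
  with speed \<open>\<surd>k\<^sub>0\<close> (the weight then only sees \<open>|x| > r\<^sub>0\<close>), gives
  \<open>\<integral> (|x| - \<surd>k\<^sub>0 t)\<^sub>+ e(t) \<le> C \<integral> (1 + |x|) e(0)\<close>.\<close>

section \<open>Directional derivatives\<close>

definition dderiv :: "'a::real_normed_vector \<Rightarrow> ('a \<Rightarrow> real) \<Rightarrow> 'a \<Rightarrow> real" where
  "dderiv v f p = frechet_derivative f (at p) v"

lemma has_derivative_dderiv:
  assumes "f differentiable at p"
  shows "(f has_derivative (\<lambda>h. dderiv h f p)) (at p within S)"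
  using assms frechet_derivative_works has_derivative_at_withinI unfolding dderiv_def
  by metis

lemma dderiv_eq:
  assumes "(f has_derivative f') (at p)"
  shows "dderiv h f p = f' h"
  using frechet_derivative_at[OF assms] by (simp add: dderiv_def)

lemma continuous_on_dderiv:
  assumes "\<And>p. dderiv v f differentiable at p"
  shows "continuous_on S (dderiv v f)"
  by (meson assms differentiable_at_withinI differentiable_imp_continuous_on differentiable_on_def)

lemma has_real_derivative_along_line:
  fixes f :: "'a::real_normed_vector \<Rightarrow> real"
  assumes "f differentiable at (p + s *\<^sub>R v)"
  shows "((\<lambda>s. f (p + s *\<^sub>R v)) has_real_derivative dderiv v f (p + s *\<^sub>R v)) (at s within S)"
proof -
  have "((\<lambda>s. p + s *\<^sub>R v) has_derivative (\<lambda>h. h *\<^sub>R v)) (at s within S)"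
    by (auto intro!: derivative_eq_intros)
  from has_derivative_compose[OF this has_derivative_dderiv[OF assms]]
  have "((\<lambda>s. f (p + s *\<^sub>R v)) has_derivative (\<lambda>h. dderiv (h *\<^sub>R v) f (p + s *\<^sub>R v))) (at s within S)"
    by (simp add: o_def)
  moreover have "linear (\<lambda>h. dderiv h f (p + s *\<^sub>R v))"
    using has_derivative_dderiv[OF assms] has_derivative_linear by blast
  then have "(\<lambda>h. dderiv (h *\<^sub>R v) f (p + s *\<^sub>R v)) = (*) (dderiv v f (p + s *\<^sub>R v))"
    using linear_scale by (fastforce simp: mult.commute)
  ultimately show ?thesis unfolding has_field_derivative_def by simp
qed

lemma has_integral_dderiv_along_line:
  fixes f :: "'a::real_normed_vector \<Rightarrow> real"
  assumes "\<And>p. f differentiable at p" and "a \<le> b"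
  shows "((\<lambda>\<sigma>. dderiv v f (p + \<sigma> *\<^sub>R v)) has_integral f (p + b *\<^sub>R v) - f (p + a *\<^sub>R v)) {a..b}"
  by (rule fundamental_theorem_of_calculus[OF assms(2)])
     (simp add: has_real_derivative_iff_has_vector_derivative[symmetric] has_real_derivative_along_line assms(1))

lemma dderiv_along_line_eq_integral:
  fixes f :: "'a::euclidean_space \<Rightarrow> real"
  assumes df: "\<And>p. f differentiable at p"
    and dv: "\<And>p. dderiv v f differentiable at p"
    and cvw: "continuous_on UNIV (dderiv w (dderiv v f))"
    and s: "a \<le> s"
  shows "dderiv w f (p + s *\<^sub>R v) - dderiv w f (p + a *\<^sub>R v)
       = integral {a..s} (\<lambda>\<sigma>. dderiv w (dderiv v f) (p + \<sigma> *\<^sub>R v))"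
proof -
  define I where "I = (\<lambda>y. integral {a..s} (\<lambda>\<sigma>. dderiv v f ((p + y *\<^sub>R w) + \<sigma> *\<^sub>R v)))"
  have I_eq: "I y = f ((p + s *\<^sub>R v) + y *\<^sub>R w) - f ((p + a *\<^sub>R v) + y *\<^sub>R w)" for y
    using integral_unique[OF has_integral_dderiv_along_line[OF df s, where v=v and p="p + y *\<^sub>R w"]]
    by (simp add: I_def algebra_simps)
  have "(I has_field_derivative integral (cbox a s) (\<lambda>\<sigma>. dderiv w (dderiv v f) ((p + \<sigma> *\<^sub>R v) + 0 *\<^sub>R w)))
      (at 0 within UNIV)"
    unfolding I_def cbox_interval[symmetric]
  proof (rule leibniz_rule_field_derivative[where fx="\<lambda>y \<sigma>. dderiv w (dderiv v f) ((p + \<sigma> *\<^sub>R v) + y *\<^sub>R w)"])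
    show "((\<lambda>y. dderiv v f (p + y *\<^sub>R w + \<sigma> *\<^sub>R v)) has_field_derivative
        dderiv w (dderiv v f) (p + \<sigma> *\<^sub>R v + y *\<^sub>R w)) (at y within UNIV)" for y \<sigma>
      using has_real_derivative_along_line[OF dv, where p="p + \<sigma> *\<^sub>R v" and s=y and v=w] by (simp add: algebra_simps)
    show "(\<lambda>\<sigma>. dderiv v f (p + y *\<^sub>R w + \<sigma> *\<^sub>R v)) integrable_on cbox a s" for y
      by (intro integrable_continuous continuous_on_compose2[OF continuous_on_dderiv[OF dv]])
         (auto intro!: continuous_intros)
    have "continuous_on (UNIV \<times> cbox a s) (\<lambda>z. dderiv w (dderiv v f) (p + snd z *\<^sub>R v + fst z *\<^sub>R w))"
      by (rule continuous_on_compose2[OF cvw]) (auto intro!: continuous_intros)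
    then show "continuous_on (UNIV \<times> cbox a s) (\<lambda>(y, \<sigma>). dderiv w (dderiv v f) (p + \<sigma> *\<^sub>R v + y *\<^sub>R w))"
      by (simp add: split_beta)
  qed auto
  moreover have "(I has_field_derivative dderiv w f (p + s *\<^sub>R v) - dderiv w f (p + a *\<^sub>R v)) (at 0 within UNIV)"
    using DERIV_diff[OF has_real_derivative_along_line[OF df, where p="p + s *\<^sub>R v" and s=0 and v=w]
                        has_real_derivative_along_line[OF df, where p="p + a *\<^sub>R v" and s=0 and v=w]]
    by (simp add: I_eq[abs_def])
  ultimately show ?thesis
    using DERIV_unique by (fastforce simp: cbox_interval)
qed

lemma dderiv_commute:
  fixes f :: "'a::euclidean_space \<Rightarrow> real"
  assumes df: "\<And>p. f differentiable at p"
    and dv: "\<And>p. dderiv v f differentiable at p"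
    and dw: "\<And>p. dderiv w f differentiable at p"
    and cvw: "continuous_on UNIV (dderiv w (dderiv v f))"
  shows "dderiv v (dderiv w f) p = dderiv w (dderiv v f) p"
proof -
  let ?F = "\<lambda>s. dderiv w f (p + s *\<^sub>R v) - dderiv w f (p + (-1) *\<^sub>R v)"
  have D1: "(?F has_field_derivative dderiv v (dderiv w f) p) (at 0)"
    using has_real_derivative_along_line[OF dw, where p=p and s=0 and v=v and S=UNIV] by (auto intro!: derivative_eq_intros)
  have "((\<lambda>s. integral {-1..s} (\<lambda>\<sigma>. dderiv w (dderiv v f) (p + \<sigma> *\<^sub>R v))) has_field_derivative
      dderiv w (dderiv v f) (p + 0 *\<^sub>R v)) (at 0 within {-1..1})"
    unfolding has_real_derivative_iff_has_vector_derivative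
    by (intro integral_has_vector_derivative continuous_on_compose2[OF cvw]) (auto intro!: continuous_intros)
  then have "((\<lambda>s. integral {-1..s} (\<lambda>\<sigma>. dderiv w (dderiv v f) (p + \<sigma> *\<^sub>R v))) has_field_derivative
      dderiv w (dderiv v f) p) (at 0 within {-1..1})"
    by simp
  then have "(?F has_field_derivative dderiv w (dderiv v f) p) (at 0 within {-1..1})"
    by (rule has_field_derivative_transform_within[where d=1])
       (use dderiv_along_line_eq_integral[OF df dv cvw, where a="-1"] in auto)
  moreover have "at (0::real) within {-1..1} = at 0"
    by (rule at_within_interior) auto
  ultimately show ?thesis
    using DERIV_unique[OF D1] by simp
qed

lemma integral_shift_cbox:
  fixes G :: "'a::euclidean_space \<Rightarrow> real"
  assumes cont: "continuous_on UNIV G"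
    and out: "\<And>x. x \<notin> cbox a b \<Longrightarrow> G x = 0"
    and out_shift: "\<And>x. x \<notin> cbox a b \<Longrightarrow> G (x + d) = 0"
  shows "integral (cbox a b) (\<lambda>x. G (x + d)) = integral (cbox a b) G"
proof -
  have GI: "(G has_integral integral (cbox a b) G) (cbox a b)"
    using cont by (auto intro!: integrable_continuous continuous_on_subset)
  have "((\<lambda>x. G (1 *\<^sub>R x + d)) has_integral (integral (cbox a b) G /\<^sub>R 1 ^ DIM('a)))
      (cbox ((a - d) /\<^sub>R 1) ((b - d) /\<^sub>R 1))"
    by (rule has_integral_affinity'[OF GI]) simp
  then have "((\<lambda>x. G (x + d)) has_integral integral (cbox a b) G) (cbox (a - d) (b - d))"
    by simp
  then have "((\<lambda>x. G (x + d)) has_integral integral (cbox a b) G) UNIV"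
  proof (rule has_integral_on_superset)
    show "G (x + d) = 0" if "x \<notin> cbox (a - d) (b - d)" for x
      using that out[of "x + d"] unfolding mem_box by (auto simp: inner_simps algebra_simps)
  qed auto
  moreover have "(\<lambda>x. if x \<in> cbox a b then G (x + d) else 0) = (\<lambda>x. G (x + d))"
    using out_shift by auto
  ultimately have "((\<lambda>x. G (x + d)) has_integral integral (cbox a b) G) (cbox a b)"
    using has_integral_restrict_UNIV[of "cbox a b" "\<lambda>x. G (x + d)"] by simp
  then show ?thesis by (rule integral_unique)
qed

lemma vanishes_outside_cbox:
  fixes G :: "'a::euclidean_space \<Rightarrow> real"
  assumes supp: "\<And>x. norm x \<ge> B \<Longrightarrow> G x = 0"
    and x: "x \<notin> cbox (-((B+1) *\<^sub>R One)) ((B+1) *\<^sub>R One)" and d: "norm d \<le> 1"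
  shows "G (x + d) = 0"
proof -
  from x obtain i where i: "i \<in> Basis" "\<not> (-(B + 1) \<le> x \<bullet> i \<and> x \<bullet> i \<le> B + 1)"
    by (auto simp: mem_box inner_simps)
  then have "\<bar>x \<bullet> i\<bar> > B + 1" by auto
  moreover have "\<bar>x \<bullet> i\<bar> \<le> norm x" using i(1) Basis_le_norm by blast
  moreover have "norm x \<le> norm (x + d) + norm d"
    by (metis add_diff_cancel norm_triangle_ineq4)
  ultimately show ?thesis using d by (intro supp) linarith
qed

lemma integral_dderiv_eq_0:
  fixes G :: "'a::euclidean_space \<Rightarrow> real"
  assumes dG: "\<And>x. G differentiable at x"
    and cont: "continuous_on UNIV (dderiv e G)"
    and supp: "\<And>x. norm x \<ge> B \<Longrightarrow> G x = 0"
    and e: "norm e \<le> 1"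
  shows "integral (cbox (-((B+1) *\<^sub>R One)) ((B+1) *\<^sub>R One)) (dderiv e G) = 0"
proof -
  define a :: 'a where "a = -((B+1) *\<^sub>R One)"
  define b :: 'a where "b = (B+1) *\<^sub>R One"
  have out: "G (x + h *\<^sub>R e) = 0" if "x \<notin> cbox a b" "\<bar>h\<bar> \<le> 1" for x h
    using that e by (intro vanishes_outside_cbox[OF supp]) (auto simp: a_def b_def mult_le_one)
  have contG: "continuous_on UNIV G"
    using dG by (auto intro!: differentiable_imp_continuous_on simp: differentiable_on_def)
  define Ph where "Ph = (\<lambda>h. integral (cbox a b) (\<lambda>x. G (x + h *\<^sub>R e)))"
  have "(Ph has_field_derivative integral (cbox a b) (\<lambda>x. dderiv e G (x + 0 *\<^sub>R e))) (at 0 within {-1..1})"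
    unfolding Ph_def
  proof (rule leibniz_rule_field_derivative[where fx="\<lambda>h x. dderiv e G (x + h *\<^sub>R e)"])
    show "((\<lambda>h. G (x + h *\<^sub>R e)) has_field_derivative dderiv e G (x + h *\<^sub>R e)) (at h within {-1..1})" for h x
      by (rule has_real_derivative_along_line[OF dG])
    show "(\<lambda>x. G (x + h *\<^sub>R e)) integrable_on cbox a b" for h
      by (intro integrable_continuous continuous_on_compose2[OF contG]) (auto intro!: continuous_intros)
    have "continuous_on ({-1..1} \<times> cbox a b) (\<lambda>z. dderiv e G (snd z + fst z *\<^sub>R e))"
      by (rule continuous_on_compose2[OF cont]) (auto intro!: continuous_intros)
    then show "continuous_on ({-1..1} \<times> cbox a b) (\<lambda>(h, x). dderiv e G (x + h *\<^sub>R e))"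
      by (simp add: split_beta)
  qed auto
  moreover have "(Ph has_field_derivative 0) (at 0 within {-1..1})"
  proof (rule has_field_derivative_transform_within[OF DERIV_const, where d=1])
    show "integral (cbox a b) G = Ph h" if "h \<in> {-1..1}" for h
      unfolding Ph_def using that out[of _ 0] out[of _ h]
      by (intro integral_shift_cbox[OF contG, symmetric]) auto
  qed auto
  moreover have "at (0::real) within {-1..1} = at 0"
    by (rule at_within_interior) auto
  ultimately show ?thesis
    using DERIV_unique by (fastforce simp: a_def b_def)
qed

lemma has_real_derivative_fst_slice:
  fixes F :: "real \<times> 'b::real_normed_vector \<Rightarrow> real"
  assumes "F differentiable at (\<tau>, x)"
  shows "((\<lambda>\<tau>. F (\<tau>, x)) has_real_derivative dderiv (1, 0) F (\<tau>, x)) (at \<tau> within S)"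
  using has_real_derivative_along_line[of F "(0, x)" \<tau> "(1, 0)" S] assms by simp

lemma has_derivative_snd_slice:
  fixes F :: "real \<times> 'b::real_normed_vector \<Rightarrow> real"
  assumes "F differentiable at (\<tau>, x)"
  shows "((\<lambda>y. F (\<tau>, y)) has_derivative (\<lambda>h. dderiv (0, h) F (\<tau>, x))) (at x within S)"
proof -
  have "((\<lambda>y. (\<tau>, y)) has_derivative (\<lambda>h. (0, h))) (at x within S)"
    by (auto intro!: derivative_eq_intros)
  from has_derivative_compose[OF this has_derivative_dderiv[OF assms]] show ?thesis
    by (simp add: o_def)
qed

section \<open>Weight profiles\<close>

definition bracket :: "real^2 \<Rightarrow> real" where "bracket x = sqrt (1 + x \<bullet> x)"

lemma bracket_bounds: "1 \<le> bracket x" "norm x \<le> bracket x" "bracket x \<le> norm x + 1"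
proof -
  have xx: "x \<bullet> x = (norm x)\<^sup>2" by (simp add: power2_norm_eq_inner)
  show "1 \<le> bracket x" unfolding bracket_def by simp
  show "norm x \<le> bracket x" unfolding bracket_def xx by (simp add: real_le_rsqrt)
  show "bracket x \<le> norm x + 1" unfolding bracket_def xx
    by (rule real_sqrt_le_iff[THEN iffD2, of _ "(norm x + 1)\<^sup>2", simplified])
       (simp add: power2_eq_square algebra_simps)
qed

lemma bracket_pos: "bracket x > 0"
  using bracket_bounds(1)[of x] by linarith

lemma has_derivative_bracket: "(bracket has_derivative (\<lambda>h. (x \<bullet> h) / bracket x)) (at x within S)"
proof -
  have "1 + x \<bullet> x > 0" by (simp add: add_pos_nonneg)
  then show ?thesis unfolding bracket_def
    by (auto intro!: derivative_eq_intros simp: inner_commute field_simps)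
qed

lemma continuous_on_bracket [continuous_intros]:
  "continuous_on S f \<Longrightarrow> continuous_on S (\<lambda>z. bracket (f z))"
  unfolding bracket_def by (auto intro!: continuous_intros)

definition pos_sq :: "real \<Rightarrow> real" where "pos_sq s = (max 0 s)\<^sup>2"

lemma has_real_derivative_pos_sq: "(pos_sq has_real_derivative 2 * max 0 x) (at x)"
proof -
  consider "x > 0" | "x < 0" | "x = 0" by linarith
  then show ?thesis
  proof cases
    case 1
    have "((\<lambda>s. s\<^sup>2) has_real_derivative 2 * max 0 x) (at x)"
      using 1 by (auto intro!: derivative_eq_intros)
    then show ?thesis
      by (rule has_field_derivative_transform_within_open[where S="{0<..}"]) (use 1 in \<open>auto simp: pos_sq_def\<close>)
  next
    case 2
    have "((\<lambda>s. 0) has_real_derivative 2 * max 0 x) (at x)" using 2 by simp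
    then show ?thesis
      by (rule has_field_derivative_transform_within_open[where S="{..<0}"]) (use 2 in \<open>auto simp: pos_sq_def\<close>)
  next
    case 3
    have "\<forall>\<^sub>F h in at_left (0::real). 0 = (pos_sq (0 + h) - pos_sq 0) / h"
      by (rule eventually_at_left_real[of "-1", THEN eventually_mono]) (auto simp: pos_sq_def)
    then have left: "((\<lambda>h. (pos_sq (0 + h) - pos_sq 0) / h) \<longlongrightarrow> 0) (at_left 0)"
      by (rule Lim_transform_eventually[OF tendsto_const])
    have "\<forall>\<^sub>F h in at_right (0::real). h = (pos_sq (0 + h) - pos_sq 0) / h"
      by (rule eventually_at_right_less[THEN eventually_mono]) (auto simp: pos_sq_def power2_eq_square)
    then have right: "((\<lambda>h. (pos_sq (0 + h) - pos_sq 0) / h) \<longlongrightarrow> 0) (at_right 0)"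
      by (rule Lim_transform_eventually[OF tendsto_ident_at])
    have "(pos_sq has_real_derivative 0) (at 0)"
      unfolding DERIV_def using left right filterlim_at_split by blast
    then show ?thesis using 3 by simp
  qed
qed

lemma has_real_derivative_pos_sq_shift:
  "((\<lambda>s. pos_sq (s - a)) has_real_derivative 2 * max 0 (x - a)) (at x)"
proof -
  have "((\<lambda>s. s - a) has_real_derivative 1) (at x)"
    by (auto intro!: derivative_eq_intros)
  from DERIV_chain2[OF has_real_derivative_pos_sq this] show ?thesis by simp
qed

text \<open>A \<open>C\<^sup>1\<close> substitute for \<open>max 0\<close>.\<close>

definition ramp :: "real \<Rightarrow> real" where "ramp y = pos_sq y / 2 - pos_sq (y - 1) / 2"
definition dramp :: "real \<Rightarrow> real" where "dramp y = max 0 y - max 0 (y - 1)"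

lemma has_real_derivative_ramp: "(ramp has_real_derivative dramp x) (at x)"
proof -
  have "((\<lambda>y. pos_sq (y - 0) / 2 - pos_sq (y - 1) / 2) has_real_derivative
      2 * max 0 (x - 0) / 2 - 2 * max 0 (x - 1) / 2) (at x)"
    by (intro DERIV_diff DERIV_cdivide has_real_derivative_pos_sq_shift)
  then show ?thesis by (simp add: ramp_def[abs_def] dramp_def)
qed

lemma continuous_on_dramp: "continuous_on S dramp"
  unfolding dramp_def by (auto intro!: continuous_intros)

lemma has_real_derivative_ramp_shift: "((\<lambda>s. ramp (s + a)) has_real_derivative dramp (x + a)) (at x)"
proof -
  have "((\<lambda>s. s + a) has_real_derivative 1) (at x)"
    by (auto intro!: derivative_eq_intros)
  from DERIV_chain2[OF has_real_derivative_ramp this] show ?thesis by simp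
qed

lemma continuous_on_dramp_shift: "continuous_on S (\<lambda>s. dramp (s + a))"
  by (rule continuous_on_compose2[OF continuous_on_dramp[of UNIV]]) (auto intro!: continuous_intros)

lemma dramp_nonneg: "dramp y \<ge> 0"
  unfolding dramp_def by simp

lemma dramp_eq_0: "y \<le> 0 \<Longrightarrow> dramp y = 0"
  unfolding dramp_def by simp

lemma ramp_nonneg: "ramp y \<ge> 0"
proof -
  have "(max 0 (y - 1))\<^sup>2 \<le> (max 0 y)\<^sup>2" by (intro power_mono) auto
  then show ?thesis by (simp add: ramp_def pos_sq_def)
qed

lemma ramp_lower: "y - 1/2 \<le> ramp y"
proof -
  consider "y \<le> 0" | "0 \<le> y" "y \<le> 1" | "y \<ge> 1" by linarith
  then show ?thesis
  proof cases
    case 2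
    have "0 \<le> (y - 1)\<^sup>2" by simp
    then show ?thesis using 2 by (simp add: ramp_def pos_sq_def max_def power2_eq_square algebra_simps)
  next
    case 3
    then show ?thesis by (simp add: ramp_def pos_sq_def max_def power2_eq_square field_simps)
  qed (auto simp: ramp_def pos_sq_def max_def power2_eq_square algebra_simps)
qed

lemma ramp_upper: "ramp y \<le> max 0 y"
proof -
  consider "y \<le> 0" | "0 \<le> y" "y \<le> 1" | "y \<ge> 1" by linarith
  then show ?thesis
  proof cases
    case 2
    have "y * y \<le> 1 * y" using 2 by (intro mult_right_mono) auto
    then show ?thesis using 2 by (simp add: ramp_def pos_sq_def max_def power2_eq_square algebra_simps)
  next
    case 3
    then show ?thesis by (simp add: ramp_def pos_sq_def max_def power2_eq_square field_simps)
  qed (auto simp: ramp_def pos_sq_def max_def power2_eq_square algebra_simps)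
qed

definition cutoff :: "real \<Rightarrow> real" where
  "cutoff s = 1 - 2 * pos_sq s + 4 * pos_sq (s - 1/2) - 2 * pos_sq (s - 1)"
definition dcutoff :: "real \<Rightarrow> real" where
  "dcutoff s = - 4 * max 0 s + 8 * max 0 (s - 1/2) - 4 * max 0 (s - 1)"

lemma has_real_derivative_cutoff: "(cutoff has_real_derivative dcutoff x) (at x)"
proof -
  have "((\<lambda>s. 1 - 2 * pos_sq (s - 0) + 4 * pos_sq (s - 1/2) - 2 * pos_sq (s - 1)) has_real_derivative
     0 - 2 * (2 * max 0 (x - 0)) + 4 * (2 * max 0 (x - 1/2)) - 2 * (2 * max 0 (x - 1))) (at x)"
    by (intro DERIV_diff DERIV_add DERIV_cmult has_real_derivative_pos_sq_shift DERIV_const)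
  then show ?thesis by (simp add: cutoff_def[abs_def] dcutoff_def)
qed

lemma continuous_on_cutoff [continuous_intros]:
  "continuous_on S f \<Longrightarrow> continuous_on S (\<lambda>z. cutoff (f z))"
  by (rule continuous_on_compose2[of UNIV cutoff])
     (auto intro: DERIV_isCont[OF has_real_derivative_cutoff] continuous_at_imp_continuous_on)

lemma continuous_on_dcutoff: "continuous_on S dcutoff"
  unfolding dcutoff_def by (auto intro!: continuous_intros)

lemma cutoff_cases:
  "s \<le> 0 \<Longrightarrow> cutoff s = 1 \<and> dcutoff s = 0"
  "0 \<le> s \<Longrightarrow> s \<le> 1/2 \<Longrightarrow> cutoff s = 1 - 2 * s\<^sup>2 \<and> dcutoff s = - 4 * s"
  "1/2 \<le> s \<Longrightarrow> s \<le> 1 \<Longrightarrow> cutoff s = 2 * (1 - s)\<^sup>2 \<and> dcutoff s = 4 * s - 4"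
  "1 \<le> s \<Longrightarrow> cutoff s = 0 \<and> dcutoff s = 0"
  by (auto simp: cutoff_def dcutoff_def pos_sq_def max_def power2_eq_square algebra_simps)

lemma dcutoff_nonpos: "dcutoff s \<le> 0"
proof -
  consider "s \<le> 0" | "0 \<le> s" "s \<le> 1/2" | "1/2 \<le> s" "s \<le> 1" | "1 \<le> s" by linarith
  then show ?thesis by cases (use cutoff_cases in auto)
qed

lemma cutoff_bounds: "0 \<le> cutoff s" "cutoff s \<le> 1"
proof -
  consider "s \<le> 0" | "0 \<le> s" "s \<le> 1/2" | "1/2 \<le> s" "s \<le> 1" | "1 \<le> s" by linarith
  then have "0 \<le> cutoff s \<and> cutoff s \<le> 1"
  proof cases
    case 2
    have "s * s \<le> (1/2) * (1/2)" using 2 by (intro mult_mono) auto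
    then show ?thesis using 2 cutoff_cases(2)[OF 2] by (auto simp: power2_eq_square)
  next
    case 3
    have "(1 - s) * (1 - s) \<le> (1/2) * (1/2)" using 3 by (intro mult_mono) auto
    then show ?thesis using 3 cutoff_cases(3)[OF 3] by (auto simp: power2_eq_square)
  qed (use cutoff_cases in auto)
  then show "0 \<le> cutoff s" "cutoff s \<le> 1" by auto
qed

lemma cutoff_antimono: "a \<le> b \<Longrightarrow> cutoff b \<le> cutoff a"
  using DERIV_nonpos_imp_nonincreasing[of a b cutoff] has_real_derivative_cutoff dcutoff_nonpos
  by blast

lemma has_real_derivative_cutoff_shift:
  "((\<lambda>s. cutoff (s - a)) has_real_derivative dcutoff (x - a)) (at x)"
proof -
  have "((\<lambda>s. s - a) has_real_derivative 1) (at x)"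
    by (auto intro!: derivative_eq_intros)
  from DERIV_chain2[OF has_real_derivative_cutoff this] show ?thesis by simp
qed

lemma continuous_on_dcutoff_shift: "continuous_on S (\<lambda>s. dcutoff (s - a))"
  by (rule continuous_on_compose2[OF continuous_on_dcutoff[of UNIV]]) (auto intro!: continuous_intros)

lemma mult_cutoff_mono: "a \<ge> 0 \<Longrightarrow> m \<le> n \<Longrightarrow> a * cutoff (b - real m) \<le> a * cutoff (b - real n)"
  by (intro mult_left_mono cutoff_antimono) auto

lemma SUP_ennreal_mult_cutoff:
  assumes "a \<ge> 0"
  shows "(SUP n. ennreal (a * cutoff (b - real (n + N)))) = ennreal a"
proof (rule antisym)
  show "(SUP n. ennreal (a * cutoff (b - real (n + N)))) \<le> ennreal a"
    using assms by (intro SUP_least ennreal_leI mult_right_le_one_le cutoff_bounds)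
  obtain n :: nat where "real n \<ge> b" using real_arch_simple by blast
  then have "ennreal a = ennreal (a * cutoff (b - real (n + N)))"
    using cutoff_cases(1)[of "b - real (n + N)"] by simp
  also have "\<dots> \<le> (SUP n. ennreal (a * cutoff (b - real (n + N))))"
    by (rule SUP_upper) simp
  finally show "ennreal a \<le> (SUP n. ennreal (a * cutoff (b - real (n + N))))" .
qed

lemma borel_measurable_continuous_ennreal:
  "continuous_on UNIV (f :: 'a::euclidean_space \<Rightarrow> real) \<Longrightarrow> (\<lambda>x. ennreal (f x)) \<in> borel_measurable lborel"
  using borel_measurable_continuous_onI measurable_lborel2 by (metis measurable_compose measurable_ennreal)

section \<open>The weighted energy inequality\<close>

lemma abs_mult_le_energy_div_sqrt:
  fixes a G k e :: real
  assumes k: "k > 0" and G: "G \<ge> 0" and e: "e = 1/2 * (a\<^sup>2 + k * G\<^sup>2)"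
  shows "\<bar>a\<bar> * G \<le> e / sqrt k"
proof -
  have kk: "sqrt k * sqrt k = k" using k by simp
  have "0 \<le> (\<bar>a\<bar> - sqrt k * G)\<^sup>2" by simp
  also have "\<dots> = a\<^sup>2 + k * G\<^sup>2 - 2 * (sqrt k * (\<bar>a\<bar> * G))"
    using kk by (simp add: power2_eq_square algebra_simps)
  finally have "2 * (sqrt k * (\<bar>a\<bar> * G)) \<le> a\<^sup>2 + k * G\<^sup>2" by linarith
  then have "sqrt k * (\<bar>a\<bar> * G) \<le> e" unfolding e by simp
  then show ?thesis using k by (simp add: le_divide_eq mult.commute)
qed

lemma weight_energy_le_flux:
  fixes a k w r S G c W e :: real
  assumes k: "k > 0" and r: "r > 0" and S: "\<bar>S\<bar> \<le> r * G" and G: "G \<ge> 0"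
    and e: "e = 1/2 * (a\<^sup>2 + k * G\<^sup>2)" and W: "W \<le> - c * \<bar>w\<bar>"
    and speed: "w \<noteq> 0 \<Longrightarrow> k \<le> c\<^sup>2" and c: "c > 0"
  shows "W * e \<le> a * k * (w / r) * S"
proof -
  have e0: "e \<ge> 0" unfolding e using k by (auto intro!: add_nonneg_nonneg mult_nonneg_nonneg)
  show ?thesis
  proof (cases "w = 0")
    case True
    then show ?thesis using W e0 by (simp add: mult_nonpos_nonneg)
  next
    case False
    have sk: "sqrt k \<le> c" using real_sqrt_le_mono[OF speed[OF False]] c by simp
    have "\<bar>a * k * (w / r) * S\<bar> = \<bar>w\<bar> * (k * (\<bar>a\<bar> * (\<bar>S\<bar> / r)))"
      using k r by (simp add: abs_mult)
    also have "\<dots> \<le> \<bar>w\<bar> * (k * (\<bar>a\<bar> * G))"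
      using S r k by (intro mult_left_mono) (auto simp: divide_le_eq mult.commute)
    also have "\<dots> \<le> \<bar>w\<bar> * (k * (e / sqrt k))"
      using abs_mult_le_energy_div_sqrt[OF k G e] k by (intro mult_left_mono) auto
    also have "\<dots> = \<bar>w\<bar> * (k / sqrt k * e)"
      by simp
    also have "\<dots> = \<bar>w\<bar> * (sqrt k * e)"
      using k by (simp add: real_div_sqrt)
    also have "\<dots> \<le> \<bar>w\<bar> * (c * e)"
      using sk e0 by (intro mult_left_mono mult_right_mono) auto
    also have "\<dots> \<le> - (W * e)"
      using mult_right_mono[OF W e0] by (simp add: algebra_simps)
    finally show ?thesis
      using abs_le_D2 neg_le_iff_le by metis
  qed
qed

lemma abs_mult_radial_le:
  fixes a S G n k km k0 R t r0 :: real
  assumes km: "km > 0" and k: "k \<ge> km" and G: "G \<ge> 0" and S: "\<bar>S\<bar> \<le> n * G" and n: "n \<ge> 0"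
    and k_out: "n > r0 \<Longrightarrow> k = k0" and R: "R > r0" and t: "t \<ge> 0" and k0: "k0 \<ge> km"
    and e: "e = 1/2 * (a\<^sup>2 + k * G\<^sup>2)"
  shows "\<bar>a * S\<bar> \<le> (if n \<le> R then R / sqrt km * e else 0)
          + 1 / sqrt k0 * (max 0 (n - sqrt k0 * t) * e) + (if R \<le> n then t * e else 0)"
proof -
  have k_pos: "k > 0" using km k by linarith
  have e_nonneg: "e \<ge> 0" unfolding e using k_pos by (auto intro!: add_nonneg_nonneg mult_nonneg_nonneg)
  have aG: "\<bar>a\<bar> * G \<le> e / sqrt k" by (rule abs_mult_le_energy_div_sqrt[OF k_pos G e])
  have aS: "\<bar>a * S\<bar> \<le> n * (\<bar>a\<bar> * G)"
    using mult_left_mono[OF S abs_ge_zero[of a]] by (simp add: abs_mult algebra_simps)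
  have k0_pos: "sqrt k0 > 0" using km k0 by simp
  have rest: "0 \<le> 1 / sqrt k0 * (max 0 (n - sqrt k0 * t) * e)" using e_nonneg k0_pos by simp
  show ?thesis
  proof (cases "n \<le> R")
    case True
    have "\<bar>a * S\<bar> \<le> R * (\<bar>a\<bar> * G)"
      using aS True by (meson G abs_ge_zero mult_nonneg_nonneg mult_right_mono order_trans)
    also have "\<dots> \<le> R * (e / sqrt km)"
    proof (intro mult_left_mono order_trans[OF aG] divide_left_mono)
      show "sqrt km \<le> sqrt k" using k by simp
    qed (use e_nonneg km k_pos n True in auto)
    finally have "\<bar>a * S\<bar> \<le> R / sqrt km * e" by simp
    moreover have "(if n \<le> R then R / sqrt km * e else 0) = R / sqrt km * e"
      using True by simp
    moreover have "0 \<le> (if R \<le> n then t * e else 0)"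
      using t e_nonneg by simp
    ultimately show ?thesis using rest by linarith
  next
    case False
    then have "k = k0" using k_out R by auto
    then have "\<bar>a * S\<bar> \<le> n * (e / sqrt k0)" using aS aG n by (metis mult_left_mono order_trans)
    also have "\<dots> \<le> (sqrt k0 * t + max 0 (n - sqrt k0 * t)) * (e / sqrt k0)"
      using e_nonneg k0_pos by (intro mult_right_mono) auto
    also have "\<dots> = t * e + 1 / sqrt k0 * (max 0 (n - sqrt k0 * t) * e)"
      using k0_pos by (simp add: field_simps)
    finally show ?thesis using False by simp
  qed
qed

abbreviation e_t :: "real \<times> (real^2)" where "e_t \<equiv> (1, 0)"
abbreviation e_x :: "2 \<Rightarrow> real \<times> (real^2)" where "e_x i \<equiv> (0, axis i 1)"

lemma e_t_in_Basis: "e_t \<in> Basis"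
  by (simp add: Basis_prod_def)

lemma e_x_in_Basis: "e_x i \<in> Basis"
  by (auto simp add: Basis_prod_def Basis_vec_def)

lemma power2_norm_vec: "(norm (x :: real^'n))\<^sup>2 = (\<Sum>i\<in>UNIV. (x $ i)\<^sup>2)"
  unfolding power2_norm_eq_inner inner_vec_def by (simp add: power2_eq_square)

locale wave_solution =
  fixes U :: "real \<times> (real^2) \<Rightarrow> real" and K :: "real^2 \<Rightarrow> real"
  assumes differentiable_U: "\<And>p. U differentiable at p"
    and differentiable_dderiv_U: "\<And>v p. v \<in> Basis \<Longrightarrow> dderiv v U differentiable at p"
    and differentiable_dderiv2_U:
      "\<And>v w p. v \<in> Basis \<Longrightarrow> w \<in> Basis \<Longrightarrow> dderiv w (dderiv v U) differentiable at p"
    and differentiable_K: "\<And>x. K differentiable at x"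
    and continuous_dderiv_K: "\<And>i. continuous_on UNIV (dderiv (axis i 1) K)"
    and K_pos: "\<And>x. K x > 0"
    and wave_eq: "\<And>\<tau> x. \<tau> \<ge> 0 \<Longrightarrow> dderiv e_t (dderiv e_t U) (\<tau>, x) =
      (\<Sum>i\<in>UNIV. dderiv (axis i 1) K x * dderiv (e_x i) U (\<tau>, x)
                  + K x * dderiv (e_x i) (dderiv (e_x i) U) (\<tau>, x))"
begin

definition "ut \<tau> x = dderiv e_t U (\<tau>, x)"
definition "ux i \<tau> x = dderiv (e_x i) U (\<tau>, x)"
definition "energy \<tau> x = 1/2 * ((ut \<tau> x)\<^sup>2 + K x * (\<Sum>i\<in>UNIV. (ux i \<tau> x)\<^sup>2))"

lemma continuous_on_K [continuous_intros]: "continuous_on S f \<Longrightarrow> continuous_on S (\<lambda>z. K (f z))"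
  by (rule continuous_on_compose2[of UNIV K])
     (auto intro: differentiable_imp_continuous_on simp: differentiable_on_def differentiable_K
           differentiable_at_withinI)

lemma continuous_on_dderiv_K [continuous_intros]:
  "continuous_on S f \<Longrightarrow> continuous_on S (\<lambda>z. dderiv (axis i 1) K (f z))"
  by (rule continuous_on_compose2[OF continuous_dderiv_K]) auto

lemma continuous_on_dderiv_U [continuous_intros]:
  "v \<in> Basis \<Longrightarrow> continuous_on S f \<Longrightarrow> continuous_on S (\<lambda>z. dderiv v U (f z))"
  by (rule continuous_on_compose2[OF continuous_on_dderiv[OF differentiable_dderiv_U]]) auto

lemma continuous_on_dderiv2_U [continuous_intros]:
  "v \<in> Basis \<Longrightarrow> w \<in> Basis \<Longrightarrow> continuous_on S f \<Longrightarrow> continuous_on S (\<lambda>z. dderiv w (dderiv v U) (f z))"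
  by (rule continuous_on_compose2[OF continuous_on_dderiv[OF differentiable_dderiv2_U]]) auto

lemma dderiv2_U_commute:
  "v \<in> Basis \<Longrightarrow> w \<in> Basis \<Longrightarrow> dderiv w (dderiv v U) p = dderiv v (dderiv w U) p"
  by (rule dderiv_commute)
     (auto intro: differentiable_U differentiable_dderiv_U continuous_on_dderiv differentiable_dderiv2_U)

lemma energy_nonneg: "energy \<tau> x \<ge> 0"
  unfolding energy_def using K_pos[of x] by (auto intro!: add_nonneg_nonneg mult_nonneg_nonneg sum_nonneg)

lemma continuous_on_energy: "continuous_on S (energy \<tau>)"
  unfolding energy_def ut_def ux_def by (auto intro!: continuous_intros e_t_in_Basis e_x_in_Basis)

lemma energy_eq_norm: "energy \<tau> x = 1/2 * ((ut \<tau> x)\<^sup>2 + K x * (norm (\<chi> i. ux i \<tau> x))\<^sup>2)"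
  by (simp add: energy_def power2_norm_vec)

end

text \<open>The weight \<open>\<psi>(\<langle>x\<rangle> - c\<tau>)\<close>, \<open>\<psi>\<close> nondecreasing, travels outwards at speed \<open>c\<close>; the factor
  \<open>\<eta>(\<langle>x\<rangle> + c\<tau>)\<close> only makes the flux compactly supported and is removed by monotone convergence
  in \<open>weighted_energy_decay\<close>.\<close>

locale wave_weighted = wave_solution +
  fixes \<psi> \<psi>' \<eta> \<eta>' :: "real \<Rightarrow> real" and c M :: real
  assumes has_real_derivative_\<psi>: "\<And>s. (\<psi> has_real_derivative \<psi>' s) (at s)"
    and has_real_derivative_\<eta>: "\<And>s. (\<eta> has_real_derivative \<eta>' s) (at s)"
    and continuous_\<psi>': "continuous_on UNIV \<psi>'" and continuous_\<eta>': "continuous_on UNIV \<eta>'"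
    and \<psi>_nonneg: "\<And>s. \<psi> s \<ge> 0" and \<psi>'_nonneg: "\<And>s. \<psi>' s \<ge> 0"
    and \<eta>_nonneg: "\<And>s. \<eta> s \<ge> 0" and \<eta>'_nonpos: "\<And>s. \<eta>' s \<le> 0"
    and \<eta>_vanishes: "\<And>s. s \<ge> M \<Longrightarrow> \<eta> s = 0 \<and> \<eta>' s = 0"
    and c_pos: "c > 0"
begin

definition "weight \<tau> x = \<psi> (bracket x - c * \<tau>) * \<eta> (bracket x + c * \<tau>)"
definition "weight_r \<tau> x = \<psi>' (bracket x - c * \<tau>) * \<eta> (bracket x + c * \<tau>)
  + \<psi> (bracket x - c * \<tau>) * \<eta>' (bracket x + c * \<tau>)"
definition "weight_t \<tau> x = - c * \<psi>' (bracket x - c * \<tau>) * \<eta> (bracket x + c * \<tau>)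
  + c * \<psi> (bracket x - c * \<tau>) * \<eta>' (bracket x + c * \<tau>)"
definition "energy_t \<tau> x = ut \<tau> x * dderiv e_t (dderiv e_t U) (\<tau>, x)
  + K x * (\<Sum>i\<in>UNIV. ux i \<tau> x * dderiv e_t (dderiv (e_x i) U) (\<tau>, x))"
definition "weighted_energy \<tau> x = weight \<tau> x * energy \<tau> x"
definition "weighted_energy_t \<tau> x = weight_t \<tau> x * energy \<tau> x + weight \<tau> x * energy_t \<tau> x"
definition "flux i \<tau> x = weight \<tau> x * ut \<tau> x * K x * ux i \<tau> x"
definition "dflux i \<tau> x = weight_r \<tau> x * (x $ i) / bracket x * ut \<tau> x * K x * ux i \<tau> x
  + weight \<tau> x * dderiv (e_x i) (dderiv e_t U) (\<tau>, x) * K x * ux i \<tau> x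
  + weight \<tau> x * ut \<tau> x * dderiv (axis i 1) K x * ux i \<tau> x
  + weight \<tau> x * ut \<tau> x * K x * dderiv (e_x i) (dderiv (e_x i) U) (\<tau>, x)"

lemma continuous_on_\<psi> [continuous_intros]: "continuous_on S f \<Longrightarrow> continuous_on S (\<lambda>z. \<psi> (f z))"
  by (rule continuous_on_compose2[of UNIV \<psi>])
     (auto intro: DERIV_isCont[OF has_real_derivative_\<psi>] continuous_at_imp_continuous_on)

lemma continuous_on_\<eta> [continuous_intros]: "continuous_on S f \<Longrightarrow> continuous_on S (\<lambda>z. \<eta> (f z))"
  by (rule continuous_on_compose2[of UNIV \<eta>])
     (auto intro: DERIV_isCont[OF has_real_derivative_\<eta>] continuous_at_imp_continuous_on)

lemma continuous_on_\<psi>' [continuous_intros]: "continuous_on S f \<Longrightarrow> continuous_on S (\<lambda>z. \<psi>' (f z))"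
  by (rule continuous_on_compose2[OF continuous_\<psi>']) auto

lemma continuous_on_\<eta>' [continuous_intros]: "continuous_on S f \<Longrightarrow> continuous_on S (\<lambda>z. \<eta>' (f z))"
  by (rule continuous_on_compose2[OF continuous_\<eta>']) auto

lemma weight_nonneg: "weight \<tau> x \<ge> 0"
  unfolding weight_def using \<psi>_nonneg \<eta>_nonneg by simp

lemma weight_eq_0: "\<tau> \<ge> 0 \<Longrightarrow> norm x \<ge> M \<Longrightarrow> weight \<tau> x = 0"
  using bracket_bounds(2)[of x] c_pos \<eta>_vanishes[of "bracket x + c * \<tau>"]
  by (simp add: weight_def add_increasing2)

lemma has_real_derivative_weighted_energy:
  "((\<lambda>\<tau>. weighted_energy \<tau> x) has_real_derivative weighted_energy_t \<tau> x) (at \<tau> within S)"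
proof -
  have dut: "((\<lambda>\<tau>. ut \<tau> x) has_real_derivative dderiv e_t (dderiv e_t U) (\<tau>, x)) (at \<tau> within S)"
    unfolding ut_def by (rule has_real_derivative_fst_slice[OF differentiable_dderiv_U[OF e_t_in_Basis]])
  have dux: "((\<lambda>\<tau>. ux i \<tau> x) has_real_derivative dderiv e_t (dderiv (e_x i) U) (\<tau>, x)) (at \<tau> within S)" for i
    unfolding ux_def by (rule has_real_derivative_fst_slice[OF differentiable_dderiv_U[OF e_x_in_Basis]])
  have d\<psi>: "((\<lambda>\<tau>. \<psi> (bracket x - c * \<tau>)) has_real_derivative \<psi>' (bracket x - c * \<tau>) * (- c)) (at \<tau> within S)"
    by (rule DERIV_chain2[OF has_real_derivative_\<psi>]) (auto intro!: derivative_eq_intros)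
  have d\<eta>: "((\<lambda>\<tau>. \<eta> (bracket x + c * \<tau>)) has_real_derivative \<eta>' (bracket x + c * \<tau>) * c) (at \<tau> within S)"
    by (rule DERIV_chain2[OF has_real_derivative_\<eta>]) (auto intro!: derivative_eq_intros)
  have de: "((\<lambda>\<tau>. energy \<tau> x) has_real_derivative energy_t \<tau> x) (at \<tau> within S)"
    unfolding energy_def energy_t_def
    by (auto intro!: derivative_eq_intros dut dux simp: sum_distrib_left algebra_simps)
  show ?thesis unfolding weighted_energy_def weighted_energy_t_def weight_def
    by (rule DERIV_cong[OF DERIV_mult[OF DERIV_mult[OF d\<psi> d\<eta>] de]])
       (simp add: weight_t_def algebra_simps)
qed

lemma has_derivative_weight:
  "(weight \<tau> has_derivative (\<lambda>h. weight_r \<tau> x * ((x \<bullet> h) / bracket x))) (at x)"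
proof -
  have "((\<lambda>y. bracket y - c * \<tau>) has_derivative (\<lambda>h. (x \<bullet> h) / bracket x)) (at x)"
    "((\<lambda>y. bracket y + c * \<tau>) has_derivative (\<lambda>h. (x \<bullet> h) / bracket x)) (at x)"
    using has_derivative_bracket by (auto intro!: derivative_eq_intros)
  from this[THEN DERIV_compose_FDERIV[OF has_real_derivative_\<psi>]]
       this[THEN DERIV_compose_FDERIV[OF has_real_derivative_\<eta>]]
  show ?thesis unfolding weight_def[abs_def]
    by (auto intro!: derivative_eq_intros simp: weight_r_def algebra_simps)
qed

lemma has_derivative_flux:
  "(flux i \<tau> has_derivative (\<lambda>h. weight \<tau> x * ut \<tau> x * K x * dderiv (0, h) (dderiv (e_x i) U) (\<tau>, x)
      + (weight \<tau> x * ut \<tau> x * dderiv h K x + (weight \<tau> x * dderiv (0, h) (dderiv e_t U) (\<tau>, x)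
      + weight_r \<tau> x * ((x \<bullet> h) / bracket x) * ut \<tau> x) * K x) * ux i \<tau> x)) (at x)"
proof -
  have dut: "((\<lambda>y. ut \<tau> y) has_derivative (\<lambda>h. dderiv (0, h) (dderiv e_t U) (\<tau>, x))) (at x)"
    unfolding ut_def by (rule has_derivative_snd_slice[OF differentiable_dderiv_U[OF e_t_in_Basis]])
  have dux: "((\<lambda>y. ux i \<tau> y) has_derivative (\<lambda>h. dderiv (0, h) (dderiv (e_x i) U) (\<tau>, x))) (at x)"
    unfolding ux_def by (rule has_derivative_snd_slice[OF differentiable_dderiv_U[OF e_x_in_Basis]])
  note has_derivative_mult[OF has_derivative_mult[OF has_derivative_mult[OF has_derivative_weight dut]
      has_derivative_dderiv[OF differentiable_K]] dux]
  then show ?thesis unfolding flux_def[abs_def] by (simp add: algebra_simps)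
qed

lemma differentiable_flux: "flux i \<tau> differentiable at x"
  using has_derivative_flux differentiable_def by blast

lemma dderiv_flux: "dderiv (axis i 1) (flux i \<tau>) x = dflux i \<tau> x"
  by (simp add: dderiv_eq[OF has_derivative_flux] dflux_def inner_axis algebra_simps)

lemma continuous_on_dflux: "continuous_on S (dflux i \<tau>)"
  unfolding dflux_def weight_r_def weight_def ut_def ux_def
  by (auto intro!: continuous_intros e_t_in_Basis e_x_in_Basis simp: bracket_pos[THEN less_imp_neq, symmetric])

lemma continuous_on_weighted_energy: "continuous_on S (weighted_energy \<tau>)"
  unfolding weighted_energy_def energy_def weight_def ut_def ux_def
  by (auto intro!: continuous_intros e_t_in_Basis e_x_in_Basis)

lemma continuous_on_weighted_energy_t: "continuous_on S (\<lambda>z. weighted_energy_t (fst z) (snd z))"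
  unfolding weighted_energy_t_def energy_def energy_t_def weight_def weight_t_def ut_def ux_def
  by (auto intro!: continuous_intros e_t_in_Basis e_x_in_Basis)

lemma sum_dflux:
  assumes "\<tau> \<ge> 0"
  shows "(\<Sum>i\<in>UNIV. dflux i \<tau> x)
    = ut \<tau> x * K x * (weight_r \<tau> x / bracket x) * (\<Sum>i\<in>UNIV. x $ i * ux i \<tau> x)
      + weight \<tau> x * K x * (\<Sum>i\<in>UNIV. ux i \<tau> x * dderiv e_t (dderiv (e_x i) U) (\<tau>, x))
      + weight \<tau> x * ut \<tau> x * dderiv e_t (dderiv e_t U) (\<tau>, x)"
  unfolding dflux_def sum.distrib wave_eq[OF assms] ux_def
  by (simp add: dderiv2_U_commute[OF e_t_in_Basis e_x_in_Basis] sum_distrib_left sum_distrib_right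
      sum_divide_distrib algebra_simps)

lemma weighted_energy_t_le_sum_dflux:
  assumes "\<tau> \<ge> 0"
    and speed: "\<psi>' (bracket x - c * \<tau>) \<noteq> 0 \<or> \<eta>' (bracket x + c * \<tau>) \<noteq> 0 \<Longrightarrow> K x \<le> c\<^sup>2"
  shows "weighted_energy_t \<tau> x \<le> (\<Sum>i\<in>UNIV. dflux i \<tau> x)"
proof -
  define g :: "real^2" where "g = (\<chi> i. ux i \<tau> x)"
  have "\<bar>x \<bullet> g\<bar> \<le> norm x * norm g" by (rule Cauchy_Schwarz_ineq2)
  also have "\<dots> \<le> bracket x * norm g" by (intro mult_right_mono bracket_bounds) auto
  finally have xg: "\<bar>x \<bullet> g\<bar> \<le> bracket x * norm g" .
  have wt: "weight_t \<tau> x \<le> - c * \<bar>weight_r \<tau> x\<bar>"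
  proof -
    have "\<psi>' (bracket x - c * \<tau>) * \<eta> (bracket x + c * \<tau>) \<ge> 0"
      "\<psi> (bracket x - c * \<tau>) * \<eta>' (bracket x + c * \<tau>) \<le> 0"
      using \<psi>'_nonneg \<eta>_nonneg \<psi>_nonneg \<eta>'_nonpos by (auto simp: mult_nonneg_nonpos)
    then have "\<bar>weight_r \<tau> x\<bar> \<le> \<psi>' (bracket x - c * \<tau>) * \<eta> (bracket x + c * \<tau>)
        - \<psi> (bracket x - c * \<tau>) * \<eta>' (bracket x + c * \<tau>)"
      unfolding weight_r_def by linarith
    from mult_left_mono[OF this less_imp_le[OF c_pos]] show ?thesis
      unfolding weight_t_def by (simp add: algebra_simps)
  qed
  have "weight_r \<tau> x \<noteq> 0 \<Longrightarrow> K x \<le> c\<^sup>2"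
    using speed unfolding weight_r_def by force
  from weight_energy_le_flux[OF K_pos bracket_pos xg norm_ge_zero energy_eq_norm[of \<tau> x, folded g_def] wt this c_pos]
  show ?thesis unfolding sum_dflux[OF assms(1)] weighted_energy_t_def energy_t_def g_def
    by (simp add: inner_vec_def algebra_simps)
qed


abbreviation "support_box \<equiv> cbox (-((M + 1) *\<^sub>R One)) ((M + 1) *\<^sub>R One) :: (real^2) set"

lemma integral_box_weighted_energy_t_nonpos:
  assumes "\<tau> \<ge> 0"
    and speed: "\<And>x. \<psi>' (bracket x - c * \<tau>) \<noteq> 0 \<or> \<eta>' (bracket x + c * \<tau>) \<noteq> 0 \<Longrightarrow> K x \<le> c\<^sup>2"
  shows "integral support_box (weighted_energy_t \<tau>) \<le> 0"
proof -
  have "continuous_on support_box (\<lambda>x. (\<lambda>z. weighted_energy_t (fst z) (snd z)) (\<tau>, x))"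
    by (rule continuous_on_compose2[OF continuous_on_weighted_energy_t[of UNIV]])
       (auto intro!: continuous_intros)
  then have slice: "continuous_on support_box (weighted_energy_t \<tau>)"
    by simp
  have "integral support_box (weighted_energy_t \<tau>) \<le> integral support_box (\<lambda>x. \<Sum>i\<in>UNIV. dflux i \<tau> x)"
    using weighted_energy_t_le_sum_dflux[OF assms]
    by (intro integral_le integrable_continuous slice continuous_intros continuous_on_dflux) auto
  also have "\<dots> = (\<Sum>i\<in>UNIV. integral support_box (dflux i \<tau>))"
    by (intro Henstock_Kurzweil_Integration.integral_sum integrable_continuous continuous_on_dflux) auto
  also have "\<dots> = 0"
  proof (intro sum.neutral ballI)
    fix i :: 2
    have "integral support_box (dderiv (axis i 1) (flux i \<tau>)) = 0"
      using weight_eq_0[OF assms(1)]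
      by (intro integral_dderiv_eq_0 differentiable_flux)
         (auto simp: dderiv_flux[abs_def] continuous_on_dflux flux_def)
    then show "integral support_box (dflux i \<tau>) = 0"
      by (simp add: dderiv_flux[abs_def])
  qed
  finally show ?thesis .
qed

lemma integral_box_weighted_energy_antimono:
  assumes T: "0 \<le> T0" "T0 \<le> T1"
    and speed: "\<And>\<tau> x. \<tau> \<in> {T0..T1} \<Longrightarrow> \<psi>' (bracket x - c * \<tau>) \<noteq> 0 \<or> \<eta>' (bracket x + c * \<tau>) \<noteq> 0
      \<Longrightarrow> K x \<le> c\<^sup>2"
  shows "integral support_box (weighted_energy T1) \<le> integral support_box (weighted_energy T0)"
proof -
  define F where "F = (\<lambda>\<tau>. integral support_box (weighted_energy \<tau>))"
  have "(F has_field_derivative integral support_box (weighted_energy_t \<tau>)) (at \<tau> within {T0..T1})"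
    if "\<tau> \<in> {T0..T1}" for \<tau>
    unfolding F_def
  proof (rule leibniz_rule_field_derivative[where fx=weighted_energy_t])
    show "continuous_on ({T0..T1} \<times> support_box) (\<lambda>(\<tau>, x). weighted_energy_t \<tau> x)"
      using continuous_on_weighted_energy_t by (simp add: split_beta)
  qed (use that in \<open>auto intro: has_real_derivative_weighted_energy integrable_continuous
         continuous_on_weighted_energy\<close>)
  then have "((\<lambda>\<tau>. integral support_box (weighted_energy_t \<tau>)) has_integral F T1 - F T0) {T0..T1}"
    by (intro fundamental_theorem_of_calculus[OF T(2)])
       (simp add: has_real_derivative_iff_has_vector_derivative[symmetric])
  then have "F T1 - F T0 \<le> 0"
    by (rule has_integral_le[OF _ has_integral_0])
       (use T speed in \<open>auto intro: integral_box_weighted_energy_t_nonpos\<close>)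
  then show ?thesis unfolding F_def by simp
qed

lemma nn_integral_weighted_energy:
  assumes "\<tau> \<ge> 0"
  shows "(\<integral>\<^sup>+x. ennreal (weighted_energy \<tau> x) \<partial>lborel) = ennreal (integral support_box (weighted_energy \<tau>))"
proof -
  have "(\<integral>\<^sup>+x. ennreal (weighted_energy \<tau> x) * indicator support_box x \<partial>lborel)
      = ennreal (integral support_box (weighted_energy \<tau>))"
    by (intro nn_integral_has_integral_lebesgue' integrable_integral integrable_continuous
        continuous_on_weighted_energy) (simp add: weighted_energy_def energy_nonneg weight_nonneg)
  moreover have "ennreal (weighted_energy \<tau> x) * indicator support_box x = ennreal (weighted_energy \<tau> x)" for x
  proof (cases "x \<in> support_box")
    case False
    then obtain i where i: "i \<in> Basis" "\<not> (-(M + 1) \<le> x \<bullet> i \<and> x \<bullet> i \<le> M + 1)"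
      unfolding mem_box by (auto simp: inner_simps)
    then have "norm x \<ge> M" using Basis_le_norm[OF i(1), of x] by linarith
    then show ?thesis using weight_eq_0[OF assms] False by (simp add: weighted_energy_def)
  qed simp
  ultimately show ?thesis by simp
qed

end

context wave_solution
begin

lemma weighted_energy_decay_cutoff:
  fixes \<psi> \<psi>' :: "real \<Rightarrow> real" and c T0 T1 r M :: real
  assumes \<psi>: "\<And>s. (\<psi> has_real_derivative \<psi>' s) (at s)" "continuous_on UNIV \<psi>'"
      "\<And>s. \<psi> s \<ge> 0" "\<And>s. \<psi>' s \<ge> 0"
    and c: "c > 0" and T: "0 \<le> T0" "T0 \<le> T1"
    and speed: "\<And>\<tau> x. \<tau> \<in> {T0..T1} \<Longrightarrow> \<psi>' (bracket x - c * \<tau>) \<noteq> 0 \<Longrightarrow> K x \<le> c\<^sup>2"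
    and speed_far: "\<And>x. norm x \<ge> r \<Longrightarrow> K x \<le> c\<^sup>2"
    and M: "r + c * T1 + 1 \<le> M"
  shows "(\<integral>\<^sup>+x. ennreal (\<psi> (bracket x - c * T1) * energy T1 x * cutoff (bracket x + c * T1 - M)) \<partial>lborel)
       \<le> (\<integral>\<^sup>+x. ennreal (\<psi> (bracket x - c * T0) * energy T0 x) \<partial>lborel)"
proof -
  interpret W: wave_weighted U K \<psi> \<psi>' "\<lambda>s. cutoff (s - M)" "\<lambda>s. dcutoff (s - M)" c "M + 1"
  proof (intro wave_weighted.intro wave_solution_axioms wave_weighted_axioms.intro \<psi> c
      has_real_derivative_cutoff_shift continuous_on_dcutoff_shift)
    show "cutoff (s - M) = 0 \<and> dcutoff (s - M) = 0" if "M + 1 \<le> s" for s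
      using cutoff_cases(4)[of "s - M"] that by simp
  qed (simp_all add: cutoff_bounds dcutoff_nonpos)
  have weighted_energy_eq:
    "W.weighted_energy \<tau> = (\<lambda>x. \<psi> (bracket x - c * \<tau>) * energy \<tau> x * cutoff (bracket x + c * \<tau> - M))" for \<tau>
    by (simp add: W.weighted_energy_def W.weight_def fun_eq_iff mult_ac)
  have W_speed: "K x \<le> c\<^sup>2"
    if "\<tau> \<in> {T0..T1}" and "\<psi>' (bracket x - c * \<tau>) \<noteq> 0 \<or> dcutoff (bracket x + c * \<tau> - M) \<noteq> 0" for \<tau> x
    using that(2)
  proof
    assume "dcutoff (bracket x + c * \<tau> - M) \<noteq> 0"
    then have "bracket x + c * \<tau> - M > 0"
      using cutoff_cases(1)[of "bracket x + c * \<tau> - M"] by (meson not_le)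
    moreover have "c * \<tau> \<le> c * T1" using that(1) c by (intro mult_left_mono) auto
    ultimately show ?thesis using bracket_bounds(3)[of x] M by (intro speed_far) linarith
  qed (use speed[OF that(1)] in auto)
  have "(\<integral>\<^sup>+x. ennreal (W.weighted_energy T1 x) \<partial>lborel) = ennreal (integral W.support_box (W.weighted_energy T1))"
    using T by (intro W.nn_integral_weighted_energy) simp
  also have "\<dots> \<le> ennreal (integral W.support_box (W.weighted_energy T0))"
    by (intro ennreal_leI W.integral_box_weighted_energy_antimono[OF T W_speed])
  also have "\<dots> = (\<integral>\<^sup>+x. ennreal (W.weighted_energy T0 x) \<partial>lborel)"
    using T by (intro W.nn_integral_weighted_energy[symmetric]) simp
  also have "\<dots> \<le> (\<integral>\<^sup>+x. ennreal (\<psi> (bracket x - c * T0) * energy T0 x) \<partial>lborel)"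
  proof (intro nn_integral_mono ennreal_leI)
    fix x
    have "0 \<le> \<psi> (bracket x - c * T0) * energy T0 x"
      using \<psi>(3) energy_nonneg by simp
    then show "W.weighted_energy T0 x \<le> \<psi> (bracket x - c * T0) * energy T0 x"
      unfolding weighted_energy_eq by (rule mult_right_le_one_le[OF _ cutoff_bounds])
  qed
  finally show ?thesis unfolding weighted_energy_eq .
qed

lemma weighted_energy_decay:
  fixes \<psi> \<psi>' :: "real \<Rightarrow> real" and c T0 T1 r :: real
  assumes \<psi>: "\<And>s. (\<psi> has_real_derivative \<psi>' s) (at s)" "continuous_on UNIV \<psi>'"
      "\<And>s. \<psi> s \<ge> 0" "\<And>s. \<psi>' s \<ge> 0"
    and c: "c > 0" and T: "0 \<le> T0" "T0 \<le> T1"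
    and speed: "\<And>\<tau> x. \<tau> \<in> {T0..T1} \<Longrightarrow> \<psi>' (bracket x - c * \<tau>) \<noteq> 0 \<Longrightarrow> K x \<le> c\<^sup>2"
    and speed_far: "\<And>x. norm x \<ge> r \<Longrightarrow> K x \<le> c\<^sup>2"
  shows "(\<integral>\<^sup>+x. ennreal (\<psi> (bracket x - c * T1) * energy T1 x) \<partial>lborel)
       \<le> (\<integral>\<^sup>+x. ennreal (\<psi> (bracket x - c * T0) * energy T0 x) \<partial>lborel)"
proof -
  define N where "N = nat \<lceil>\<bar>r\<bar> + c * T1 + 1\<rceil>"
  define e where "e = (\<lambda>x. \<psi> (bracket x - c * T1) * energy T1 x)"
  define f where "f = (\<lambda>n x. ennreal (e x * cutoff (bracket x + c * T1 - real (n + N))))"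
  have e_nonneg: "e x \<ge> 0" for x
    using \<psi>(3) energy_nonneg by (simp add: e_def)
  have "incseq f"
    unfolding f_def by (intro incseq_SucI le_funI ennreal_leI mult_cutoff_mono e_nonneg) simp
  moreover have "(SUP n. f n x) = ennreal (e x)" for x
    unfolding f_def by (rule SUP_ennreal_mult_cutoff[OF e_nonneg])
  moreover have "continuous_on UNIV \<psi>"
    using \<psi>(1) by (meson DERIV_isCont continuous_at_imp_continuous_on)
  then have "f n \<in> borel_measurable lborel" for n
    unfolding f_def e_def
    by (intro borel_measurable_continuous_ennreal continuous_intros continuous_on_energy
        continuous_on_compose2[OF \<open>continuous_on UNIV \<psi>\<close>]) auto
  ultimately have "(\<integral>\<^sup>+x. ennreal (e x) \<partial>lborel) = (SUP n. integral\<^sup>N lborel (f n))"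
    using nn_integral_monotone_convergence_SUP[of f lborel] by simp
  also have "\<dots> \<le> (\<integral>\<^sup>+x. ennreal (\<psi> (bracket x - c * T0) * energy T0 x) \<partial>lborel)"
  proof (rule SUP_least)
    fix n
    have "r + c * T1 + 1 \<le> real (n + N)" unfolding N_def by linarith
    with \<psi> c T speed speed_far
    show "integral\<^sup>N lborel (f n) \<le> (\<integral>\<^sup>+x. ennreal (\<psi> (bracket x - c * T0) * energy T0 x) \<partial>lborel)"
      unfolding f_def e_def by (rule weighted_energy_decay_cutoff)
  qed
  finally show ?thesis by (simp add: e_def)
qed

section \<open>The multiplier term\<close>

lemma nn_integral_norm_energy_le:
  assumes K: "\<And>x. K x \<le> c\<^sup>2" and c: "c > 0" and T: "0 \<le> T" "c * T \<le> b"
  shows "(\<integral>\<^sup>+x. ennreal (norm x * energy T x) \<partial>lborel)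
       \<le> (\<integral>\<^sup>+x. ennreal ((b + 2) * ((1 + norm x) * energy 0 x)) \<partial>lborel)"
proof -
  have b: "b \<ge> 0" using c T by (smt (verit) mult_nonneg_nonneg)
  have "(\<integral>\<^sup>+x. ennreal (norm x * energy T x) \<partial>lborel)
      \<le> (\<integral>\<^sup>+x. ennreal (ramp (bracket x - c * T + (b + 1)) * energy T x) \<partial>lborel)"
  proof (intro nn_integral_mono ennreal_leI mult_right_mono energy_nonneg)
    show "norm x \<le> ramp (bracket x - c * T + (b + 1))" for x
      using ramp_lower[of "bracket x - c * T + (b + 1)"] bracket_bounds(2)[of x] T(2) by linarith
  qed
  also have "\<dots> \<le> (\<integral>\<^sup>+x. ennreal (ramp (bracket x - c * 0 + (b + 1)) * energy 0 x) \<partial>lborel)"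
    by (rule weighted_energy_decay[where \<psi>'="\<lambda>s. dramp (s + (b + 1))" and r=0])
       (use K c T in \<open>auto intro: has_real_derivative_ramp_shift continuous_on_dramp_shift
         ramp_nonneg dramp_nonneg\<close>)
  also have "\<dots> \<le> (\<integral>\<^sup>+x. ennreal ((b + 2) * ((1 + norm x) * energy 0 x)) \<partial>lborel)"
  proof (intro nn_integral_mono ennreal_leI)
    fix x
    have "ramp (bracket x - c * 0 + (b + 1)) \<le> norm x + b + 2"
      using ramp_upper[of "bracket x - c * 0 + (b + 1)"] bracket_bounds[of x] b by simp
    also have "\<dots> \<le> (b + 2) * (1 + norm x)"
      using mult_nonneg_nonneg[OF _ norm_ge_zero, of "b + 1" x] b by (simp add: algebra_simps)
    finally show "ramp (bracket x - c * 0 + (b + 1)) * energy 0 x \<le> (b + 2) * ((1 + norm x) * energy 0 x)"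
      using energy_nonneg by (simp add: mult_right_mono mult.assoc[symmetric])
  qed
  finally show ?thesis .
qed

lemma nn_integral_exterior_energy_le:
  assumes c: "c > 0" and K: "\<And>x. norm x > r \<Longrightarrow> K x = c\<^sup>2" and r: "r \<ge> 0"
    and \<tau>: "r + 2 \<le> c * \<tau>" "0 \<le> \<tau>" "\<tau> \<le> t"
  shows "(\<integral>\<^sup>+x. ennreal (max 0 (norm x - c * t) * energy t x) \<partial>lborel)
       \<le> (\<integral>\<^sup>+x. ennreal (norm x * energy \<tau> x) \<partial>lborel)"
proof -
  have speed: "K x \<le> c\<^sup>2" if "s \<in> {\<tau>..t}" and "dramp (bracket x - c * s + 1) \<noteq> 0" for s x
  proof -
    have "bracket x - c * s + 1 > 0"
      using that(2) dramp_eq_0[of "bracket x - c * s + 1"] by (meson not_le)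
    moreover have "c * \<tau> \<le> c * s" using that(1) c by (intro mult_left_mono) auto
    ultimately have "norm x > r" using \<tau>(1) bracket_bounds(3)[of x] by linarith
    then show ?thesis using K by simp
  qed
  have "(\<integral>\<^sup>+x. ennreal (max 0 (norm x - c * t) * energy t x) \<partial>lborel)
      \<le> (\<integral>\<^sup>+x. ennreal (ramp (bracket x - c * t + 1) * energy t x) \<partial>lborel)"
  proof (intro nn_integral_mono ennreal_leI mult_right_mono energy_nonneg)
    show "max 0 (norm x - c * t) \<le> ramp (bracket x - c * t + 1)" for x
      using ramp_lower[of "bracket x - c * t + 1"] ramp_nonneg[of "bracket x - c * t + 1"]
        bracket_bounds(2)[of x] by linarith
  qed
  also have "\<dots> \<le> (\<integral>\<^sup>+x. ennreal (ramp (bracket x - c * \<tau> + 1) * energy \<tau> x) \<partial>lborel)"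
    by (rule weighted_energy_decay[where \<psi>'="\<lambda>s. dramp (s + 1)" and r="r + 1"])
       (use c \<tau> K speed in \<open>auto intro: has_real_derivative_ramp_shift continuous_on_dramp_shift
         ramp_nonneg dramp_nonneg\<close>)
  also have "\<dots> \<le> (\<integral>\<^sup>+x. ennreal (norm x * energy \<tau> x) \<partial>lborel)"
  proof (intro nn_integral_mono ennreal_leI mult_right_mono energy_nonneg)
    show "ramp (bracket x - c * \<tau> + 1) \<le> norm x" for x
      using ramp_upper[of "bracket x - c * \<tau> + 1"] \<tau>(1) bracket_bounds(3)[of x] r
      by (smt (verit) norm_ge_zero)
  qed
  finally show ?thesis .
qed

lemma nn_integral_exterior_energy_bound:
  assumes B: "\<And>x. K x \<le> B" and k0: "k0 > 0" and r0: "r0 \<ge> 0"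
    and K_out: "\<And>x. norm x > r0 \<Longrightarrow> K x = k0" and t: "t \<ge> 0"
  shows "(\<integral>\<^sup>+x. ennreal (max 0 (norm x - sqrt k0 * t) * energy t x) \<partial>lborel)
    \<le> (\<integral>\<^sup>+x. ennreal ((sqrt (max B k0) * ((r0 + 2) / sqrt k0) + 2) * ((1 + norm x) * energy 0 x)) \<partial>lborel)"
proof -
  define \<tau> where "\<tau> = (r0 + 2) / sqrt k0"
  have \<tau>: "sqrt k0 * \<tau> = r0 + 2" "\<tau> \<ge> 0"
    using k0 r0 by (simp_all add: \<tau>_def)
  have cmax: "K x \<le> (sqrt (max B k0))\<^sup>2" "sqrt (max B k0) > 0" for x
    using B[of x] k0 by auto
  have early: "(\<integral>\<^sup>+x. ennreal (norm x * energy T x) \<partial>lborel)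
      \<le> (\<integral>\<^sup>+x. ennreal ((sqrt (max B k0) * \<tau> + 2) * ((1 + norm x) * energy 0 x)) \<partial>lborel)"
    if "0 \<le> T" "T \<le> \<tau>" for T
    using that cmax by (intro nn_integral_norm_energy_le[where c="sqrt (max B k0)"]) (auto intro: mult_left_mono)
  show ?thesis
  proof (cases "t \<le> \<tau>")
    case True
    have "(\<integral>\<^sup>+x. ennreal (max 0 (norm x - sqrt k0 * t) * energy t x) \<partial>lborel)
        \<le> (\<integral>\<^sup>+x. ennreal (norm x * energy t x) \<partial>lborel)"
      using k0 t by (intro nn_integral_mono ennreal_leI mult_right_mono energy_nonneg) auto
    with early[OF t True] show ?thesis by (simp add: \<tau>_def)
  next
    case False
    have "(\<integral>\<^sup>+x. ennreal (max 0 (norm x - sqrt k0 * t) * energy t x) \<partial>lborel)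
        \<le> (\<integral>\<^sup>+x. ennreal (norm x * energy \<tau> x) \<partial>lborel)"
      using k0 K_out r0 \<tau> False by (intro nn_integral_exterior_energy_le[where r=r0]) auto
    with early[OF \<tau>(2) order_refl] show ?thesis by (simp add: \<tau>_def)
  qed
qed

lemma ennreal_abs_ut_radial_le:
  assumes km: "km > 0" and K_lower: "\<And>x. K x \<ge> km" and K_out: "\<And>x. norm x > r0 \<Longrightarrow> K x = k0"
    and r0: "r0 \<ge> 0" and R: "R > r0" and t: "t \<ge> 0" and k0: "k0 \<ge> km"
  shows "ennreal \<bar>ut t x * (x \<bullet> (\<chi> i. ux i t x))\<bar>
    \<le> ennreal (R / sqrt km) * (ennreal (energy t x) * indicator (cball 0 R) x)
      + ennreal (1 / sqrt k0) * ennreal (max 0 (norm x - sqrt k0 * t) * energy t x)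
      + ennreal t * (ennreal (energy t x) * indicator {x. norm x \<ge> R} x)"
proof -
  have R_pos: "R / sqrt km \<ge> 0" "1 / sqrt k0 \<ge> 0"
    using r0 R km k0 by auto
  have "ennreal \<bar>ut t x * (x \<bullet> (\<chi> i. ux i t x))\<bar>
      \<le> ennreal ((if norm x \<le> R then R / sqrt km * energy t x else 0)
        + 1 / sqrt k0 * (max 0 (norm x - sqrt k0 * t) * energy t x) + (if R \<le> norm x then t * energy t x else 0))"
    by (intro ennreal_leI abs_mult_radial_le[OF km K_lower norm_ge_zero Cauchy_Schwarz_ineq2 norm_ge_zero
          K_out R t k0 energy_eq_norm])
  also have "\<dots> = ennreal (if norm x \<le> R then R / sqrt km * energy t x else 0)
        + ennreal (1 / sqrt k0 * (max 0 (norm x - sqrt k0 * t) * energy t x))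
        + ennreal (if R \<le> norm x then t * energy t x else 0)"
  proof -
    have "0 \<le> (if norm x \<le> R then R / sqrt km * energy t x else 0)"
      "0 \<le> 1 / sqrt k0 * (max 0 (norm x - sqrt k0 * t) * energy t x)"
      "0 \<le> (if R \<le> norm x then t * energy t x else 0)"
      using mult_nonneg_nonneg[OF R_pos(1) energy_nonneg] mult_nonneg_nonneg[OF t energy_nonneg]
        R_pos(2) energy_nonneg[of t x] by simp_all
    then show ?thesis by (simp only: ennreal_plus add_nonneg_nonneg)
  qed
  moreover have "ennreal (if norm x \<le> R then R / sqrt km * energy t x else 0)
      = ennreal (R / sqrt km) * (ennreal (energy t x) * indicator (cball 0 R) x)"
    using ennreal_mult[OF R_pos(1) energy_nonneg[of t x]] by (simp add: indicator_def dist_norm)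
  moreover have "ennreal (if R \<le> norm x then t * energy t x else 0)
      = ennreal t * (ennreal (energy t x) * indicator {x. norm x \<ge> R} x)"
    using ennreal_mult[OF t energy_nonneg[of t x]] by (simp add: indicator_def)
  moreover have "ennreal (1 / sqrt k0 * (max 0 (norm x - sqrt k0 * t) * energy t x))
      = ennreal (1 / sqrt k0) * ennreal (max 0 (norm x - sqrt k0 * t) * energy t x)"
    using R_pos energy_nonneg[of t x] by (intro ennreal_mult) auto
  ultimately show ?thesis by simp
qed

lemma nn_integral_abs_ut_radial_split:
  assumes km: "km > 0" and K_lower: "\<And>x. K x \<ge> km" and K_out: "\<And>x. norm x > r0 \<Longrightarrow> K x = k0"
    and r0: "r0 \<ge> 0" and R: "R > r0" and t: "t \<ge> 0" and k0: "k0 \<ge> km"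
  shows "(\<integral>\<^sup>+x. ennreal \<bar>ut t x * (x \<bullet> (\<chi> i. ux i t x))\<bar> \<partial>lborel)
      \<le> ennreal (R / sqrt km) * (\<integral>\<^sup>+x\<in>cball 0 R. ennreal (energy t x) \<partial>lborel)
        + ennreal (1 / sqrt k0) * (\<integral>\<^sup>+x. ennreal (max 0 (norm x - sqrt k0 * t) * energy t x) \<partial>lborel)
        + ennreal t * (\<integral>\<^sup>+x\<in>{x. norm x \<ge> R}. ennreal (energy t x) \<partial>lborel)"
proof -
  have "{x::real^2. R \<le> norm x} \<in> sets lborel"
    by (simp add: sets_lborel closed_Collect_le continuous_intros)
  moreover have "(\<lambda>x. ennreal (energy t x)) \<in> borel_measurable lborel"
    by (intro borel_measurable_continuous_ennreal continuous_on_energy)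
  ultimately have energy_parts:
    "(\<lambda>x. ennreal (energy t x) * indicator (cball 0 R) x) \<in> borel_measurable lborel"
    "(\<lambda>x. ennreal (energy t x) * indicator {x. norm x \<ge> R} x) \<in> borel_measurable lborel"
    by (intro borel_measurable_times_ennreal borel_measurable_indicator; simp add: sets_lborel)+
  have "(\<lambda>x. ennreal (max 0 (norm x - sqrt k0 * t) * energy t x)) \<in> borel_measurable lborel"
    by (intro borel_measurable_continuous_ennreal continuous_intros continuous_on_energy)
  moreover have "(\<integral>\<^sup>+x. ennreal \<bar>ut t x * (x \<bullet> (\<chi> i. ux i t x))\<bar> \<partial>lborel)
      \<le> (\<integral>\<^sup>+x. ennreal (R / sqrt km) * (ennreal (energy t x) * indicator (cball 0 R) x)
        + ennreal (1 / sqrt k0) * ennreal (max 0 (norm x - sqrt k0 * t) * energy t x)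
        + ennreal t * (ennreal (energy t x) * indicator {x. norm x \<ge> R} x) \<partial>lborel)"
    by (intro nn_integral_mono ennreal_abs_ut_radial_le[OF km K_lower K_out r0 R t k0])
  ultimately show ?thesis
    using energy_parts by (simp add: nn_integral_add nn_integral_cmult)
qed

lemma nn_integral_abs_ut_radial_le:
  assumes km: "km > 0" and K_lower: "\<And>x. K x \<ge> km" and K_out: "\<And>x. norm x > r0 \<Longrightarrow> K x = k0"
    and r0: "r0 \<ge> 0" and R: "R > r0" and t: "t \<ge> 0" and k0: "k0 \<ge> km" and C: "C \<ge> 0"
    and exterior: "(\<integral>\<^sup>+x. ennreal (max 0 (norm x - sqrt k0 * t) * energy t x) \<partial>lborel)
             \<le> (\<integral>\<^sup>+x. ennreal (C * ((1 + norm x) * energy 0 x)) \<partial>lborel)"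
  shows "(\<integral>\<^sup>+x. ennreal \<bar>ut t x * (x \<bullet> (\<chi> i. ux i t x))\<bar> \<partial>lborel)
     \<le> ennreal (R / sqrt km) * (\<integral>\<^sup>+x\<in>cball 0 R. ennreal (energy t x) \<partial>lborel)
       + ennreal (C / sqrt km) * (\<integral>\<^sup>+x. ennreal ((1 + norm x) * energy 0 x) \<partial>lborel)
       + ennreal t * (\<integral>\<^sup>+x\<in>{x. norm x \<ge> R}. ennreal (energy t x) \<partial>lborel)"
proof -
  let ?E0 = "\<integral>\<^sup>+x. ennreal ((1 + norm x) * energy 0 x) \<partial>lborel"
  have "(\<lambda>x. ennreal (C * ((1 + norm x) * energy 0 x))) = (\<lambda>x. ennreal C * ennreal ((1 + norm x) * energy 0 x))"
    using C energy_nonneg by (intro ext ennreal_mult) auto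
  moreover have "(\<lambda>x. ennreal ((1 + norm x) * energy 0 x)) \<in> borel_measurable lborel"
    by (intro borel_measurable_continuous_ennreal continuous_intros continuous_on_energy)
  ultimately have "(\<integral>\<^sup>+x. ennreal (C * ((1 + norm x) * energy 0 x)) \<partial>lborel) = ennreal C * ?E0"
    by (simp add: nn_integral_cmult)
  moreover have "ennreal (1 / sqrt k0) * ennreal C \<le> ennreal (C / sqrt km)"
    using C km k0 by (simp add: ennreal_mult[symmetric] divide_left_mono)
  ultimately have "ennreal (1 / sqrt k0) * (\<integral>\<^sup>+x. ennreal (max 0 (norm x - sqrt k0 * t) * energy t x) \<partial>lborel)
      \<le> ennreal (C / sqrt km) * ?E0"
    using mult_left_mono[OF exterior, of "ennreal (1 / sqrt k0)"]
      mult_right_mono[of "ennreal (1 / sqrt k0) * ennreal C" "ennreal (C / sqrt km)" ?E0]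
    by (simp add: mult.assoc)
  with nn_integral_abs_ut_radial_split[OF km K_lower K_out r0 R t k0] show ?thesis
    by (meson add_left_mono add_right_mono order_trans)
qed

end

section \<open>Smooth solutions\<close>

lemma eq_at_0_if_eq_on_pos:
  fixes f g :: "real \<Rightarrow> real"
  assumes "continuous_on UNIV f" "continuous_on UNIV g" "\<And>t. t > 0 \<Longrightarrow> f t = g t"
  shows "f 0 = g 0"
proof -
  have "(f \<longlongrightarrow> f 0) (at_right 0)" "(g \<longlongrightarrow> g 0) (at_right 0)"
    using assms(1,2) by (auto simp: continuous_on_def intro: tendsto_within_subset)
  moreover have "\<forall>\<^sub>F t in at_right 0. f t = g t"
    using eventually_at_right_less[of "0::real"] by eventually_elim (use assms(3) in auto)
  ultimately show ?thesis
    using Lim_transform_eventually tendsto_unique[OF trivial_limit_at_right_real] by blast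
qed

context
  fixes u :: "real \<Rightarrow> real^2 \<Rightarrow> real"
  assumes differentiable: "\<And>p. (\<lambda>p. u (fst p) (snd p)) differentiable at p"
begin

lemma dt_eq_dderiv: "dt u t x = dderiv e_t (\<lambda>p. u (fst p) (snd p)) (t, x)"
  using has_real_derivative_fst_slice[OF differentiable, where \<tau>=t and x=x and S=UNIV]
  by (simp add: dt_def DERIV_imp_deriv)

lemma grad_eq_dderiv: "grad (u t) x = (\<chi> i. dderiv (e_x i) (\<lambda>p. u (fst p) (snd p)) (t, x))"
  using frechet_derivative_at[OF has_derivative_snd_slice[OF differentiable, where \<tau>=t and x=x and S=UNIV], symmetric]
  by (simp add: grad_def)

lemma dt_dt_eq_dderiv:
  assumes "\<And>p. dderiv e_t (\<lambda>p. u (fst p) (snd p)) differentiable at p"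
  shows "dt (dt u) t x = dderiv e_t (dderiv e_t (\<lambda>p. u (fst p) (snd p))) (t, x)"
  using has_real_derivative_fst_slice[OF assms, where \<tau>=t and x=x and S=UNIV]
  by (simp add: dt_eq_dderiv[abs_def] dt_def DERIV_imp_deriv)

lemma divergence_eq_dderiv:
  assumes K: "\<And>x. K differentiable at x"
    and ux: "\<And>p i. dderiv (e_x i) (\<lambda>p. u (fst p) (snd p)) differentiable at p"
  shows "divergence (\<lambda>y. K y *\<^sub>R grad (u t) y) x
    = (\<Sum>i\<in>UNIV. dderiv (axis i 1) K x * dderiv (e_x i) (\<lambda>p. u (fst p) (snd p)) (t, x)
        + K x * dderiv (e_x i) (dderiv (e_x i) (\<lambda>p. u (fst p) (snd p))) (t, x))"
proof -
  let ?U = "\<lambda>p. u (fst p) (snd p)"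
  have components: "(\<lambda>y. (K y *\<^sub>R grad (u t) y) $ i) = (\<lambda>y. K y * dderiv (e_x i) ?U (t, y))" for i
    by (simp add: grad_eq_dderiv)
  have "((\<lambda>y. K y * dderiv (e_x i) ?U (t, y)) has_derivative
      (\<lambda>h. K x * dderiv (0, h) (dderiv (e_x i) ?U) (t, x) + dderiv h K x * dderiv (e_x i) ?U (t, x))) (at x)" for i
    by (rule has_derivative_mult[OF has_derivative_dderiv[OF K] has_derivative_snd_slice[OF ux]])
  from frechet_derivative_at[OF this, symmetric] show ?thesis
    unfolding divergence_def components by (simp add: dderiv_def[symmetric] add.commute)
qed

end

context wave_solution
begin

context
  fixes u :: "real \<Rightarrow> real^2 \<Rightarrow> real"
  assumes U_eq: "U = (\<lambda>p. u (fst p) (snd p))"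
begin

lemma differentiable_curried: "(\<lambda>p. u (fst p) (snd p)) differentiable at p"
  using differentiable_U by (simp add: U_eq)

lemma edens_eq_energy: "edens K u t x = energy t x"
  unfolding energy_def ut_def ux_def
  by (simp add: U_eq edens_def dt_eq_dderiv[OF differentiable_curried]
      grad_eq_dderiv[OF differentiable_curried] power2_norm_vec)

lemma dt_mult_radial_grad_eq: "dt u t x * (x \<bullet> grad (u t) x) = ut t x * (x \<bullet> (\<chi> i. ux i t x))"
  unfolding ut_def ux_def
  by (simp add: U_eq dt_eq_dderiv[OF differentiable_curried] grad_eq_dderiv[OF differentiable_curried])

end

end

lemma wave_solution_if_smooth:
  fixes u :: "real \<Rightarrow> real^2 \<Rightarrow> real" and K :: "real^2 \<Rightarrow> real"
  assumes K: "BC1 K" "\<And>x. K x > 0"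
    and smooth: "smooth (\<lambda>p :: real \<times> (real^2). u (fst p) (snd p))"
    and pde: "\<forall>t>0. \<forall>x. dt (dt u) t x = divergence (\<lambda>y. K y *\<^sub>R grad (u t) y) x"
  shows "wave_solution (\<lambda>p. u (fst p) (snd p)) K"
proof -
  let ?U = "\<lambda>p :: real \<times> (real^2). u (fst p) (snd p)"
  have iter: "set vs \<subseteq> Basis \<Longrightarrow> iter_pderiv ?U vs differentiable at p" for vs p
    using smooth unfolding smooth_def by blast
  have dU: "?U differentiable at p" for p
    using iter[of "[]"] by simp
  have dU1: "dderiv v ?U differentiable at p" if "v \<in> Basis" for v p
    using iter[of "[v]"] that by (simp add: dderiv_def[abs_def])
  have dU2: "dderiv w (dderiv v ?U) differentiable at p" if "v \<in> Basis" "w \<in> Basis" for v w p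
    using iter[of "[w, v]"] that by (simp add: dderiv_def[abs_def])
  have dK: "K differentiable at x" and cK: "continuous_on UNIV (dderiv (axis i 1) K)" for x i
    using K(1) by (simp_all add: BC1_def dderiv_def[abs_def])
  let ?rhs = "\<lambda>s x. \<Sum>i\<in>UNIV. dderiv (axis i 1) K x * dderiv (e_x i) ?U (s, x)
    + K x * dderiv (e_x i) (dderiv (e_x i) ?U) (s, x)"
  have pde_pos: "dderiv e_t (dderiv e_t ?U) (s, x) = ?rhs s x" if "s > 0" for s x
    using pde that dt_dt_eq_dderiv[OF dU dU1[OF e_t_in_Basis]] divergence_eq_dderiv[OF dU dK dU1[OF e_x_in_Basis]]
    by simp
  have slice: "continuous_on UNIV (\<lambda>s. F (s, x))" if "continuous_on UNIV F" for F :: "real \<times> (real^2) \<Rightarrow> real" and x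
    by (rule continuous_on_compose2[OF that]) (auto intro!: continuous_intros)
  have "dderiv e_t (dderiv e_t ?U) (s, x) = ?rhs s x" if "s \<ge> 0" for s x
  proof (cases "s = 0")
    case True
    have "(\<lambda>s. dderiv e_t (dderiv e_t ?U) (s, x)) 0 = (\<lambda>s. ?rhs s x) 0"
      by (rule eq_at_0_if_eq_on_pos)
         (auto intro!: slice continuous_intros continuous_on_dderiv dU1 dU2 e_t_in_Basis e_x_in_Basis pde_pos)
    then show ?thesis using True by simp
  qed (use that pde_pos in auto)
  then show ?thesis
    using dU dU1 dU2 dK cK K(2) by unfold_locales auto
qed

theorem lemma3p2:
  fixes K :: "real^2 \<Rightarrow> real" and km r0 k0 :: real
  assumes K_BC1: "BC1 K"
    and km_pos: "km > 0" and K_lower: "\<forall>x. K x \<ge> km"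
    and K_rad: "\<forall>x. x \<bullet> grad K x \<le> 0"
    and r0_pos: "r0 > 0" and k0_ge: "k0 \<ge> km"
    and K_out: "\<forall>x. norm x > r0 \<longrightarrow> K x = k0"
  shows "\<exists>C>0. \<forall>(u0 :: real^2 \<Rightarrow> real) (u1 :: real^2 \<Rightarrow> real) (u :: real \<Rightarrow> real^2 \<Rightarrow> real) R t.
      C0_inf u0 \<longrightarrow> C0_inf u1 \<longrightarrow>
      smooth (\<lambda>p :: real \<times> (real^2). u (fst p) (snd p)) \<longrightarrow>
      (\<forall>t>0. \<forall>x. dt (dt u) t x = divergence (\<lambda>y. K y *\<^sub>R grad (u t) y) x) \<longrightarrow>
      u 0 = u0 \<longrightarrow> (\<forall>x. dt u 0 x = u1 x) \<longrightarrow>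
      R > r0 \<longrightarrow> t > R / sqrt k0 \<longrightarrow>
      (\<integral>\<^sup>+ x. ennreal \<bar>dt u t x * (x \<bullet> grad (u t) x)\<bar> \<partial>lborel)
        \<le> ennreal (R / sqrt km) * (\<integral>\<^sup>+ x\<in>cball 0 R. ennreal (edens K u t x) \<partial>lborel)
          + ennreal (C / sqrt km) * (\<integral>\<^sup>+ x. ennreal ((1 + norm x) * edens K u 0 x) \<partial>lborel)
          + ennreal t * (\<integral>\<^sup>+ x\<in>{x. norm x \<ge> R}. ennreal (edens K u t x) \<partial>lborel)"
proof -
  obtain B where B: "\<And>x. K x \<le> B"
    using K_BC1 unfolding BC1_def bounded_iff by (metis abs_le_D1 rangeI real_norm_def)
  have k0: "k0 > 0" using km_pos k0_ge by linarith
  define C where "C = sqrt (max B k0) * ((r0 + 2) / sqrt k0) + 2"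
  have "C > 0" using k0 r0_pos by (simp add: C_def add_nonneg_pos)
  moreover have "(\<integral>\<^sup>+ x. ennreal \<bar>dt u t x * (x \<bullet> grad (u t) x)\<bar> \<partial>lborel)
        \<le> ennreal (R / sqrt km) * (\<integral>\<^sup>+ x\<in>cball 0 R. ennreal (edens K u t x) \<partial>lborel)
          + ennreal (C / sqrt km) * (\<integral>\<^sup>+ x. ennreal ((1 + norm x) * edens K u 0 x) \<partial>lborel)
          + ennreal t * (\<integral>\<^sup>+ x\<in>{x. norm x \<ge> R}. ennreal (edens K u t x) \<partial>lborel)"
    if smooth: "smooth (\<lambda>p :: real \<times> (real^2). u (fst p) (snd p))"
      and pde: "\<forall>t>0. \<forall>x. dt (dt u) t x = divergence (\<lambda>y. K y *\<^sub>R grad (u t) y) x"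
      and R: "R > r0" and t: "t > R / sqrt k0" for u R t
  proof -
    interpret wave_solution "\<lambda>p. u (fst p) (snd p)" K
      using K_lower km_pos by (intro wave_solution_if_smooth[OF K_BC1 _ smooth pde]) (auto intro: less_le_trans)
    have "t \<ge> 0" using R r0_pos k0 t by (smt (verit) divide_nonneg_pos real_sqrt_gt_0_iff)
    with nn_integral_abs_ut_radial_le[OF km_pos _ _ less_imp_le[OF r0_pos] R _ k0_ge]
      nn_integral_exterior_energy_bound[OF B k0 less_imp_le[OF r0_pos]] K_lower K_out \<open>C > 0\<close>
    show ?thesis
      unfolding dt_mult_radial_grad_eq[OF refl] edens_eq_energy[OF refl] C_def by simp
  qed
  ultimately show ?thesis by blast
qed

end
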